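(* Let $d,m\ge1$, $\nu>0$, $\boldsymbol{\xi},\mathbf{y}\in\mathbb{R}^d$, $\boldsymbol{\Omega}$ a $d\times d$ positive definite matrix and $\bar{\boldsymbol{\Gamma}}$ an $m\times m$ positive definite correlation matrix. Let $\mathbf{y}_*=(\mathbf{0}^\top,\mathbf{y}^\top)^\top$, $\boldsymbol{\xi}_*=(\mathbf{0}^\top,\boldsymbol{\xi}^\top)^\top\in\mathbb{R}^{m+d}$ and $\boldsymbol{\Omega}_*=\mathrm{diag}(\bar{\boldsymbol{\Gamma}},\boldsymbol{\Omega})$. Then $$T_{d+m}(\mathbf{y}_*-\boldsymbol{\xi}_*;\boldsymbol{\Omega}_*,\nu)=T_d(\mathbf{y}-\boldsymbol{\xi};\boldsymbol{\Omega},\nu)\,T_m(\mathbf{0};\bar{\boldsymbol{\Gamma}},\nu).$$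
   Context: $T_k(\mathbf{x};\boldsymbol{\Sigma},\nu)$ denotes the cumulative distribution function, evaluated at $\mathbf{x}\in\mathbb{R}^k$, of the $k$-dimensional Student $t$ distribution with location $\mathbf{0}$, positive definite dispersion matrix $\boldsymbol{\Sigma}$ and $\nu$ degrees of freedom (i.e. of $V^{-1/2}\mathbf{X}$ with $\mathbf{X}\sim\mathcal{N}_k(\mathbf{0},\boldsymbol{\Sigma})$ independent of $V\sim\mathrm{Gamma}(\nu/2,\nu/2)$). *)

theory Defs
  imports "HOL-Probability.Probability"
begin

definition pos_def_mat :: "real^'n^'n \<Rightarrow> bool" where
  "pos_def_mat S \<longleftrightarrow> transpose S = S \<and> (\<forall>x. x \<noteq> 0 \<longrightarrow> x \<bullet> (S *v x) > 0)"

definition pos_def_corr_mat :: "real^'n^'n \<Rightarrow> bool" where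
  "pos_def_corr_mat S \<longleftrightarrow> pos_def_mat S \<and> (\<forall>i. S $ i $ i = 1)"

definition mvn_density :: "real^'n^'n \<Rightarrow> real^'n \<Rightarrow> real" where
  "mvn_density S x =
     exp (- (x \<bullet> (matrix_inv S *v x)) / 2) / sqrt ((2 * pi) ^ CARD('n) * det S)"

definition mvn :: "real^'n^'n \<Rightarrow> (real^'n) measure" where
  "mvn S = density lborel (\<lambda>x. ennreal (mvn_density S x))"

definition gamma_density :: "real \<Rightarrow> real \<Rightarrow> real \<Rightarrow> real" where
  "gamma_density a b v =
     (if v > 0 then b powr a * v powr (a - 1) * exp (- b * v) / Gamma a else 0)"

definition gamma_distr :: "real \<Rightarrow> real \<Rightarrow> real measure" where
  "gamma_distr a b = density lborel (\<lambda>v. ennreal (gamma_density a b v))"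

text \<open>CDF of the multivariate Student t distribution with location 0, dispersion S and
  nu degrees of freedom: the law of V^(-1/2) X with X ~ N(0,S) independent of
  V ~ Gamma(nu/2, nu/2).\<close>
definition mvt_cdf :: "real^'n \<Rightarrow> real^'n^'n \<Rightarrow> real \<Rightarrow> real" where
  "mvt_cdf x S nu =
     measure (mvn S \<Otimes>\<^sub>M gamma_distr (nu/2) (nu/2))
       {(X, V). \<forall>i. X $ i / sqrt V \<le> x $ i}"

definition block_diag :: "real^'m^'m \<Rightarrow> real^'d^'d \<Rightarrow> real^('m + 'd)^('m + 'd)" where
  "block_diag A B = (\<chi> i j. case (i, j) of
       (Inl a, Inl b) \<Rightarrow> A $ a $ b
     | (Inr a, Inr b) \<Rightarrow> B $ a $ b
     | _ \<Rightarrow> 0)"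

definition vstack :: "real^'m \<Rightarrow> real^'d \<Rightarrow> real^('m + 'd)" where
  "vstack u w = (\<chi> i. case i of Inl a \<Rightarrow> u $ a | Inr b \<Rightarrow> w $ b)"

end

theory Submission
  imports Defs
begin

(* Stacking the two blocks, the normal law with dispersion diag(Gamma_bar, Omega) is the image of
   N(0, Gamma_bar) x N(0, Omega): the density factorises because the inverse and the determinant
   of a block-diagonal matrix are computed blockwise.  Given V > 0, the condition X1 / sqrt V <= 0
   on the first block is just X1 <= 0 and does not involve V, so integrating over V splits the
   joint probability as P(X1 <= 0) * T_d(y - xi; Omega, nu); the same observation gives
   T_m(0; Gamma_bar, nu) = P(X1 <= 0).  Only the Gamma law has to be normalised: the normal
   densities enter only through this factorisation. *)

section \<open>Block-diagonal matrices\<close>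

lemma sum_UNIV_sum:
  "(\<Sum>i\<in>(UNIV :: ('a::finite + 'b::finite) set). f i) = (\<Sum>a\<in>UNIV. f (Inl a)) + (\<Sum>b\<in>UNIV. f (Inr b))"
  by (subst UNIV_Plus_UNIV [symmetric], subst sum.Plus) (simp_all add: o_def)

lemma prod_UNIV_sum:
  "(\<Prod>i\<in>(UNIV :: ('a::finite + 'b::finite) set). f i) = (\<Prod>a\<in>UNIV. f (Inl a)) * (\<Prod>b\<in>UNIV. f (Inr b))"
  by (subst UNIV_Plus_UNIV [symmetric], subst prod.Plus) (simp_all add: o_def)

lemma block_diag_nth [simp]:
  "block_diag A B $ Inl a $ Inl a' = A $ a $ a'"
  "block_diag A B $ Inr b $ Inr b' = B $ b $ b'"
  "block_diag A B $ Inl a $ Inr b = 0"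
  "block_diag A B $ Inr b $ Inl a = 0"
  by (simp_all add: block_diag_def)

lemma vstack_nth [simp]: "vstack u w $ Inl a = u $ a" "vstack u w $ Inr b = w $ b"
  by (simp_all add: vstack_def)

lemma vstack_diff: "vstack u w - vstack u' w' = vstack (u - u') (w - w')"
  by (simp add: vec_eq_iff split_sum_all)

lemma inner_vstack: "vstack u w \<bullet> vstack u' w' = u \<bullet> u' + w \<bullet> w'"
  by (simp add: inner_vec_def sum_UNIV_sum)

lemma block_diag_mult_vstack: "block_diag A B *v vstack u w = vstack (A *v u) (B *v w)"
  by (simp add: vec_eq_iff split_sum_all matrix_vector_mult_def sum_UNIV_sum)

lemma block_diag_mult: "block_diag A B ** block_diag C D = block_diag (A ** C) (B ** D)"
  by (simp add: vec_eq_iff split_sum_all matrix_matrix_mult_def sum_UNIV_sum)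

lemma block_diag_mat_1: "block_diag (mat 1) (mat 1) = mat 1"
  by (simp add: vec_eq_iff split_sum_all mat_def)

lemma matrix_mul_matrix_inv:
  fixes A :: "'a::semiring_1^'n^'n"
  assumes "invertible A"
  shows "A ** matrix_inv A = mat 1" "matrix_inv A ** A = mat 1"
  using someI_ex [OF assms [unfolded invertible_def]] by (simp_all add: matrix_inv_def)

lemma matrix_inv_unique:
  fixes A :: "'a::semiring_1^'n^'n"
  assumes AB: "A ** B = mat 1" and BA: "B ** A = mat 1"
  shows "matrix_inv A = B"
  unfolding matrix_inv_def
proof (rule some_equality)
  fix C assume "A ** C = mat 1 \<and> C ** A = mat 1"
  then have "(B ** A) ** C = B" by (simp flip: matrix_mul_assoc)
  then show "C = B" by (simp add: BA)
qed (use assms in simp)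

lemma matrix_inv_block_diag:
  fixes A :: "real^'m^'m" and B :: "real^'d^'d"
  assumes "invertible A" "invertible B"
  shows "matrix_inv (block_diag A B) = block_diag (matrix_inv A) (matrix_inv B)"
  by (rule matrix_inv_unique)
    (simp_all add: block_diag_mult block_diag_mat_1 matrix_mul_matrix_inv assms)

lemma map_sum_eq_map_permutation:
  "map_sum q id = map_permutation UNIV Inl q"
  "map_sum id r = map_permutation UNIV Inr r"
  by (auto simp: fun_eq_iff split_sum_all map_permutation_def restrict_id_def)

lemma
  fixes q :: "'a::finite \<Rightarrow> 'a" and r :: "'b::finite \<Rightarrow> 'b"
  assumes "q permutes UNIV" "r permutes UNIV"
  shows permutes_map_sum: "map_sum q r permutes UNIV"
    and sign_map_sum: "sign (map_sum q r) = sign q * sign r"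
proof -
  have factor: "map_sum q r = map_sum q id \<circ> map_sum id r"
    by (simp add: map_sum.comp)
  have perm: "map_sum q (id :: 'b \<Rightarrow> 'b) permutes UNIV" "map_sum (id :: 'a \<Rightarrow> 'a) r permutes UNIV"
    unfolding map_sum_eq_map_permutation
    by (rule permutes_subset [OF map_permutation_permutes]; simp add: assms bij_betw_def)+
  then show "map_sum q r permutes UNIV"
    unfolding factor by (rule permutes_compose [rotated])
  have "sign (map_sum q r) = sign (map_sum q (id :: 'b \<Rightarrow> 'b)) * sign (map_sum (id :: 'a \<Rightarrow> 'a) r)"
    unfolding factor using perm by (simp add: sign_compose permutes_imp_permutation)
  also have "\<dots> = sign q * sign r"
    unfolding map_sum_eq_map_permutation using assms by (simp add: sign_map_permutation)
  finally show "sign (map_sum q r) = sign q * sign r" .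
qed

lemma det_block_diag:
  fixes A :: "real^'m^'m" and B :: "real^'d^'d"
  shows "det (block_diag A B) = det A * det B"
proof -
  let ?term = "\<lambda>p. of_int (sign p) * (\<Prod>i\<in>UNIV. block_diag A B $ i $ p i)"
  let ?perms = "{p. p permutes (UNIV :: ('m + 'd) set)}"
  let ?perms_A = "{q. q permutes (UNIV :: 'm set)}" and ?perms_B = "{r. r permutes (UNIV :: 'd set)}"
  let ?blockwise = "(\<lambda>(q, r). map_sum q r) ` (?perms_A \<times> ?perms_B)"
  \<comment> \<open>a permutation whose entries all lie in the diagonal blocks preserves both blocks\<close>
  have vanish: "?term p = 0" if p: "p \<in> ?perms - ?blockwise" for p
  proof (rule ccontr)
    assume "?term p \<noteq> 0"
    then have nz: "block_diag A B $ i $ p i \<noteq> 0" for i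
      by auto
    define q where "q = projl \<circ> p \<circ> Inl"
    define r where "r = projr \<circ> p \<circ> Inr"
    have p_eq: "p = map_sum q r"
    proof
      fix x show "p x = map_sum q r x"
        using nz [of x] by (cases x; cases "p x") (auto simp: q_def r_def)
    qed
    have "inj (map_sum q r)"
      using p p_eq by (auto dest: permutes_inj)
    then have "inj q" "inj r"
      unfolding inj_def by (metis map_sum.simps(1) sum.inject(1), metis map_sum.simps(2) sum.inject(2))
    then have "q permutes UNIV" "r permutes UNIV"
      by (auto intro!: bij_imp_permutes simp: bij_def finite_UNIV_inj_surj)
    then show False
      using p p_eq by auto
  qed
  have "det (block_diag A B) = sum ?term ?perms"
    by (simp add: det_def)
  also have "\<dots> = sum ?term ?blockwise"
    using vanish by (intro sum.mono_neutral_right) (auto simp: finite_permutations permutes_map_sum)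
  also have "\<dots> = (\<Sum>(q, r)\<in>?perms_A \<times> ?perms_B. ?term (map_sum q r))"
    by (subst sum.reindex) (auto simp: inj_on_def fun_eq_iff split_sum_all case_prod_unfold)
  also have "\<dots> = (\<Sum>(q, r)\<in>?perms_A \<times> ?perms_B.
      (of_int (sign q) * (\<Prod>a\<in>UNIV. A $ a $ q a)) * (of_int (sign r) * (\<Prod>b\<in>UNIV. B $ b $ r b)))"
    by (intro sum.cong) (auto simp: sign_map_sum prod_UNIV_sum)
  also have "\<dots> = det A * det B"
    by (simp add: det_def sum_product sum.cartesian_product)
  finally show ?thesis .
qed

section \<open>Positive definite matrices\<close>

lemma invertible_if_quadratic_form_pos:
  fixes A :: "real^'n^'n"
  assumes "\<And>x. x \<noteq> 0 \<Longrightarrow> x \<bullet> (A *v x) > 0"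
  shows "invertible A"
proof -
  have "\<forall>x. A *v x = 0 \<longrightarrow> x = 0"
    using assms by force
  then show ?thesis
    by (simp add: invertible_left_inverse matrix_left_invertible_ker)
qed

lemma pos_def_mat_invertible: "pos_def_mat A \<Longrightarrow> invertible A"
  by (rule invertible_if_quadratic_form_pos) (simp add: pos_def_mat_def)

lemma pos_def_mat_det_pos:
  fixes A :: "real^'n^'n"
  assumes "pos_def_mat A"
  shows "det A > 0"
proof (rule ccontr)
  assume "\<not> det A > 0"
  \<comment> \<open>the segment from \<open>mat 1\<close> to \<open>A\<close> stays positive definite, so \<open>det\<close> cannot change sign on it\<close>
  define M where "M t = t *\<^sub>R A + (1 - t) *\<^sub>R mat 1" for t :: real
  have invertible: "invertible (M t)" if "0 \<le> t" "t \<le> 1" for t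
  proof (rule invertible_if_quadratic_form_pos)
    fix x :: "real^'n" assume "x \<noteq> 0"
    then have "x \<bullet> (A *v x) > 0" "x \<bullet> x > 0"
      using assms by (auto simp: pos_def_mat_def)
    then have "t * (x \<bullet> (A *v x)) + (1 - t) * (x \<bullet> x) > 0"
      using that by (cases "t = 0") (auto intro: add_pos_nonneg)
    then show "x \<bullet> (M t *v x) > 0"
      by (simp add: M_def matrix_vector_mult_add_rdistrib inner_add_right
          flip: scaleR_matrix_vector_assoc)
  qed
  have "continuous_on {0..1} (\<lambda>t. det (M t))"
    unfolding det_def M_def by (intro continuous_intros)
  moreover have "det (M 1) \<le> 0" "0 \<le> det (M 0)"
    using \<open>\<not> det A > 0\<close> by (simp_all add: M_def)
  ultimately obtain t where "0 \<le> t" "t \<le> 1" "det (M t) = 0"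
    using IVT2' [of "\<lambda>t. det (M t)" 1 0 0] by auto
  then show False
    using invertible invertible_det_nz by blast
qed

section \<open>Normal laws with block-diagonal dispersion\<close>

lemma mvn_density_nonneg: "pos_def_mat S \<Longrightarrow> mvn_density S x \<ge> 0"
  using pos_def_mat_det_pos [of S] by (simp add: mvn_density_def)

lemma mvn_density_block_diag:
  fixes A :: "real^'m^'m" and B :: "real^'d^'d"
  assumes "pos_def_mat A" "pos_def_mat B"
  shows "mvn_density (block_diag A B) (vstack u w) = mvn_density A u * mvn_density B w"
  using pos_def_mat_invertible [OF assms(1)] pos_def_mat_invertible [OF assms(2)]
  by (simp add: mvn_density_def matrix_inv_block_diag block_diag_mult_vstack inner_vstack
      det_block_diag power_add real_sqrt_mult add_divide_distrib diff_divide_distrib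
      flip: exp_add)

lemma borel_measurable_mvn_density [measurable]: "mvn_density S \<in> borel_measurable borel"
proof -
  have "continuous_on UNIV (mvn_density S)"
    unfolding mvn_density_def inner_vec_def matrix_vector_mult_def divide_inverse
    by (intro continuous_intros)
  then show ?thesis
    by (rule borel_measurable_continuous_onI)
qed

lemma sigma_finite_density_lborel:
  "f \<in> borel_measurable borel \<Longrightarrow> sigma_finite_measure (density lborel (\<lambda>x. ennreal (f x)))"
  by (subst sigma_finite_measure.sigma_finite_iff_density_finite [OF sigma_finite_lborel]) auto

lemma sets_mvn [measurable_cong, simp]: "sets (mvn S) = sets borel"
  by (simp add: mvn_def)

lemma space_mvn [simp]: "space (mvn S) = UNIV"
  by (simp add: mvn_def)

lemma sigma_finite_mvn: "sigma_finite_measure (mvn S)"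
  unfolding mvn_def by (rule sigma_finite_density_lborel) simp

lemma continuous_on_vstack: "continuous_on UNIV (case_prod vstack :: (real^'m) \<times> (real^'d) \<Rightarrow> _)"
proof -
  have "continuous_on UNIV (\<lambda>x :: (real^'m) \<times> (real^'d).
      \<chi> i. case i of Inl a \<Rightarrow> fst x $ a | Inr b \<Rightarrow> snd x $ b)"
  proof (rule continuous_on_vec_lambda)
    fix i :: "'m + 'd"
    show "continuous_on UNIV (\<lambda>x :: (real^'m) \<times> (real^'d). case i of Inl a \<Rightarrow> fst x $ a | Inr b \<Rightarrow> snd x $ b)"
      by (cases i) (auto intro!: continuous_intros)
  qed
  then show ?thesis
    by (simp add: vstack_def case_prod_unfold)
qed

lemma borel_measurable_vstack [measurable (raw)]:
  fixes f :: "'a \<Rightarrow> real^'m" and g :: "'a \<Rightarrow> real^'d"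
  assumes "f \<in> borel_measurable M" "g \<in> borel_measurable M"
  shows "(\<lambda>x. vstack (f x) (g x)) \<in> borel_measurable M"
proof -
  have "case_prod vstack \<in> borel_measurable (borel \<Otimes>\<^sub>M borel :: ((real^'m) \<times> (real^'d)) measure)"
    using borel_measurable_continuous_onI [OF continuous_on_vstack] by (simp add: borel_prod)
  from measurable_compose [OF measurable_Pair [OF assms] this] show ?thesis
    by simp
qed

lemma prod_Basis_cart: "(\<Prod>b\<in>Basis. x \<bullet> b) = (\<Prod>i\<in>UNIV. (x :: real^'n) $ i)"
  by (simp add: Basis_vec_def cart_eq_inner_axis axis_eq_axis prod.UNION_disjoint)

lemma emeasure_lborel_box_cart:
  fixes l u :: "real^'n"
  assumes "\<And>i. l $ i \<le> u $ i"
  shows "emeasure lborel (box l u) = ennreal (\<Prod>i\<in>UNIV. u $ i - l $ i)"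
proof -
  have "\<And>b. b \<in> Basis \<Longrightarrow> l \<bullet> b \<le> u \<bullet> b"
    using assms by (auto simp: Basis_vec_def cart_eq_inner_axis [symmetric])
  then show ?thesis
    by (simp add: prod_Basis_cart)
qed

lemma distr_vstack_lborel:
  "distr (lborel \<Otimes>\<^sub>M lborel :: ((real^'m) \<times> (real^'d)) measure) borel (case_prod vstack) = lborel"
proof (rule lborel_eqI [symmetric])
  fix l u :: "real^('m + 'd)"
  assume le: "\<And>b. b \<in> Basis \<Longrightarrow> l \<bullet> b \<le> u \<bullet> b"
  have le': "l $ i \<le> u $ i" for i
    using le [of "axis i 1"] by (auto simp: Basis_vec_def cart_eq_inner_axis)
  let ?lA = "\<chi> a. l $ Inl a" and ?uA = "\<chi> a. u $ Inl a"
  let ?lB = "\<chi> b. l $ Inr b" and ?uB = "\<chi> b. u $ Inr b"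
  have "case_prod vstack -` box l u = box ?lA ?uA \<times> box ?lB ?uB"
    by (auto simp: mem_box_cart split_sum_all)
  then have "emeasure (distr (lborel \<Otimes>\<^sub>M lborel) borel (case_prod vstack)) (box l u)
      = emeasure (lborel \<Otimes>\<^sub>M lborel) (box ?lA ?uA \<times> box ?lB ?uB)"
    by (subst emeasure_distr) (simp_all add: space_pair_measure)
  also have "\<dots> = ennreal (\<Prod>i\<in>UNIV. u $ i - l $ i)"
    using le' by (simp add: lborel.emeasure_pair_measure_Times emeasure_lborel_box_cart
        prod_UNIV_sum ennreal_mult prod_nonneg)
  also have "\<dots> = ennreal (\<Prod>b\<in>Basis. (u - l) \<bullet> b)"
    by (simp add: prod_Basis_cart)
  finally show "emeasure (distr (lborel \<Otimes>\<^sub>M lborel) borel (case_prod vstack)) (box l u)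
      = ennreal (\<Prod>b\<in>Basis. (u - l) \<bullet> b)" .
qed simp

lemma mvn_block_diag:
  fixes A :: "real^'m^'m" and B :: "real^'d^'d"
  assumes "pos_def_mat A" "pos_def_mat B"
  shows "mvn (block_diag A B) = distr (mvn A \<Otimes>\<^sub>M mvn B) borel (case_prod vstack)"
proof -
  have "mvn (block_diag A B) = density (distr (lborel \<Otimes>\<^sub>M lborel) borel (case_prod vstack))
          (\<lambda>x. ennreal (mvn_density (block_diag A B) x))"
    by (simp add: mvn_def distr_vstack_lborel)
  also have "\<dots> = distr (density (lborel \<Otimes>\<^sub>M lborel)
      (\<lambda>x. ennreal (mvn_density (block_diag A B) (case_prod vstack x)))) borel (case_prod vstack)"
    by (rule density_distr) simp_all
  also have "(\<lambda>x. ennreal (mvn_density (block_diag A B) (case_prod vstack x)))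
      = (\<lambda>(u, w). ennreal (mvn_density A u) * ennreal (mvn_density B w))"
    using assms by (auto simp: fun_eq_iff mvn_density_block_diag ennreal_mult mvn_density_nonneg)
  also have "density (lborel \<Otimes>\<^sub>M lborel) \<dots> = mvn A \<Otimes>\<^sub>M mvn B"
    unfolding mvn_def
    by (rule pair_measure_density [symmetric])
      (simp_all add: sigma_finite_density_lborel lborel.sigma_finite_measure_axioms)
  finally show ?thesis .
qed

section \<open>Gamma laws\<close>

lemma borel_measurable_gamma_density [measurable]: "gamma_density a b \<in> borel_measurable borel"
  unfolding gamma_density_def by measurable

lemma sets_gamma_distr [measurable_cong, simp]: "sets (gamma_distr a b) = sets borel"
  by (simp add: gamma_distr_def)

lemma sigma_finite_gamma_distr: "sigma_finite_measure (gamma_distr a b)"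
  unfolding gamma_distr_def by (rule sigma_finite_density_lborel) simp

lemma AE_gamma_distr_pos: "AE v in gamma_distr a b. v > 0"
  unfolding gamma_distr_def by (subst AE_density) (auto simp: gamma_density_def)

lemma gamma_density_eq_scaled:
  assumes "b > 0"
  shows "gamma_density a b v = b / Gamma a * (indicator {0..} (b * v) * (b * v) powr (a - 1) / exp (b * v))"
proof (cases "v > 0")
  case True
  have "b powr a = b powr 1 * b powr (a - 1)"
    by (subst powr_add [symmetric]) simp
  then have "b powr a = b * b powr (a - 1)"
    using assms by (simp add: abs_of_pos)
  then show ?thesis
    using True assms by (simp add: gamma_density_def powr_mult exp_minus field_simps)
next
  case False
  then show ?thesis
    using assms by (cases "v = 0") (auto simp: gamma_density_def indicator_def zero_le_mult_iff)
qed

text \<open>Substituting \<open>t = b * v\<close> in Euler's integral for \<open>Gamma a\<close>.\<close>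

lemma prob_space_gamma_distr:
  assumes a: "a > 0" and b: "b > 0"
  shows "prob_space (gamma_distr a b)"
proof (rule prob_spaceI)
  let ?h = "\<lambda>t :: real. indicator {0..} t * t powr (a - 1) / exp t :: real"
  have h_nonneg: "?h t \<ge> 0" for t
    by (simp add: indicator_def)
  have Gamma_pos: "Gamma a > 0"
    using a by (rule Gamma_real_pos)
  have "ennreal (Gamma a) = (\<integral>\<^sup>+t. ennreal (?h t) \<partial>lborel)"
    using Gamma_conv_nn_integral_real [OF a] by simp
  also have "\<dots> = ennreal b * (\<integral>\<^sup>+v. ennreal (?h (b * v)) \<partial>lborel)"
    using nn_integral_real_affine [of ?h b 0] b by simp
  finally have Gamma_eq: "ennreal (Gamma a) = ennreal b * (\<integral>\<^sup>+v. ennreal (?h (b * v)) \<partial>lborel)" .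
  have "emeasure (gamma_distr a b) (space (gamma_distr a b)) = (\<integral>\<^sup>+v. ennreal (gamma_density a b v) \<partial>lborel)"
    by (simp add: gamma_distr_def emeasure_density)
  also have "\<dots> = (\<integral>\<^sup>+v. ennreal (1 / Gamma a) * (ennreal b * ennreal (?h (b * v))) \<partial>lborel)"
    using b Gamma_pos h_nonneg
    by (intro nn_integral_cong) (simp add: gamma_density_eq_scaled flip: ennreal_mult)
  also have "\<dots> = ennreal (1 / Gamma a) * ennreal (Gamma a)"
    by (simp add: nn_integral_cmult Gamma_eq)
  also have "\<dots> = 1"
    using Gamma_pos by (simp flip: ennreal_mult)
  finally show "emeasure (gamma_distr a b) (space (gamma_distr a b)) = 1" .
qed

section \<open>Student t distribution functions\<close>

lemma borel_measurable_vec_nth [measurable (raw)]: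
  "f \<in> borel_measurable M \<Longrightarrow> (\<lambda>x. f x $ i :: real) \<in> borel_measurable M"
  by (rule measurable_compose [OF _ borel_measurable_nth])

lemma
  fixes M :: "(real^'n) measure" and N :: "real measure"
  assumes "sigma_finite_measure M" "sigma_finite_measure N"
    and sets_M: "sets M = sets borel" and sets_N: "sets N = sets borel"
  shows emeasure_pair_scaled_le: "emeasure (M \<Otimes>\<^sub>M N) {(X, V). \<forall>i. X $ i / sqrt V \<le> z $ i}
      = (\<integral>\<^sup>+V. emeasure M {X. \<forall>i. X $ i / sqrt V \<le> z $ i} \<partial>N)"
    and measurable_emeasure_scaled_le:
      "(\<lambda>V. emeasure M {X. \<forall>i. X $ i / sqrt V \<le> z $ i}) \<in> borel_measurable N"
proof -
  interpret pair_sigma_finite M N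
    using assms by (simp add: pair_sigma_finite_def)
  note [measurable_cong] = sets_M sets_N
  have "{p \<in> space (M \<Otimes>\<^sub>M N). case p of (X, V) \<Rightarrow> \<forall>i. X $ i / sqrt V \<le> z $ i} \<in> sets (M \<Otimes>\<^sub>M N)"
    by (rule predE) measurable
  moreover have "space (M \<Otimes>\<^sub>M N) = UNIV"
    using sets_eq_imp_space_eq [OF sets_M] sets_eq_imp_space_eq [OF sets_N]
    by (simp add: space_pair_measure)
  ultimately have S: "{(X, V). \<forall>i. X $ i / sqrt V \<le> z $ i} \<in> sets (M \<Otimes>\<^sub>M N)"
    by simp
  have sections: "(\<lambda>X. (X, V)) -` {(X, V). \<forall>i. X $ i / sqrt V \<le> z $ i} = {X. \<forall>i. X $ i / sqrt V \<le> z $ i}" for V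
    by auto
  show "emeasure (M \<Otimes>\<^sub>M N) {(X, V). \<forall>i. X $ i / sqrt V \<le> z $ i}
      = (\<integral>\<^sup>+V. emeasure M {X. \<forall>i. X $ i / sqrt V \<le> z $ i} \<partial>N)"
    using emeasure_pair_measure_alt2 [OF S] by (simp only: sections)
  show "(\<lambda>V. emeasure M {X. \<forall>i. X $ i / sqrt V \<le> z $ i}) \<in> borel_measurable N"
    using measurable_emeasure_Pair2 [OF S] by (simp only: sections)
qed

lemma vimage_vstack_scaled_le:
  assumes "V > 0"
  shows "case_prod vstack -` {X. \<forall>i. X $ i / sqrt V \<le> vstack 0 z $ i}
      = {u. \<forall>i. u $ i \<le> 0} \<times> {w. \<forall>i. w $ i / sqrt V \<le> z $ i}"
  using assms by (auto simp: split_sum_all divide_le_0_iff)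

lemma emeasure_mvn_block_diag_scaled_le:
  fixes A :: "real^'m^'m" and B :: "real^'d^'d" and z :: "real^'d"
  assumes A: "pos_def_mat A" and B: "pos_def_mat B" and "V > 0"
  shows "emeasure (mvn (block_diag A B)) {X. \<forall>i. X $ i / sqrt V \<le> vstack 0 z $ i}
      = emeasure (mvn A) {u. \<forall>i. u $ i \<le> 0} * emeasure (mvn B) {w. \<forall>i. w $ i / sqrt V \<le> z $ i}"
proof -
  interpret B: sigma_finite_measure "mvn B"
    by (rule sigma_finite_mvn)
  have "emeasure (mvn (block_diag A B)) {X. \<forall>i. X $ i / sqrt V \<le> vstack 0 z $ i}
      = emeasure (mvn A \<Otimes>\<^sub>M mvn B)
          (case_prod vstack -` {X. \<forall>i. X $ i / sqrt V \<le> vstack 0 z $ i} \<inter> space (mvn A \<Otimes>\<^sub>M mvn B))"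
    unfolding mvn_block_diag [OF A B] by (rule emeasure_distr) measurable
  also have "\<dots> = emeasure (mvn A \<Otimes>\<^sub>M mvn B) ({u. \<forall>i. u $ i \<le> 0} \<times> {w. \<forall>i. w $ i / sqrt V \<le> z $ i})"
    by (subst vimage_vstack_scaled_le [OF \<open>V > 0\<close>]) (simp add: space_pair_measure)
  also have "\<dots> = emeasure (mvn A) {u. \<forall>i. u $ i \<le> 0} * emeasure (mvn B) {w. \<forall>i. w $ i / sqrt V \<le> z $ i}"
    by (rule B.emeasure_pair_measure_Times) simp_all
  finally show ?thesis .
qed

lemma mvt_cdf_0:
  assumes "nu > 0"
  shows "mvt_cdf 0 S nu = measure (mvn S) {u. \<forall>i. u $ i \<le> 0}"
proof -
  let ?G = "gamma_distr (nu/2) (nu/2)"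
  interpret G: prob_space ?G
    using assms by (intro prob_space_gamma_distr) simp_all
  have "emeasure (mvn S \<Otimes>\<^sub>M ?G) {(X, V). \<forall>i. X $ i / sqrt V \<le> 0 $ i}
      = (\<integral>\<^sup>+V. emeasure (mvn S) {X. \<forall>i. X $ i / sqrt V \<le> 0 $ i} \<partial>?G)"
    by (rule emeasure_pair_scaled_le) (simp_all add: sigma_finite_mvn sigma_finite_gamma_distr)
  also have "\<dots> = (\<integral>\<^sup>+V. emeasure (mvn S) {u. \<forall>i. u $ i \<le> 0} \<partial>?G)"
  proof (rule nn_integral_cong_AE)
    have orthant: "{X. \<forall>i. X $ i / sqrt V \<le> 0 $ i} = {u. \<forall>i. u $ i \<le> 0}" if "V > 0" for V
      using that by (auto simp: divide_le_0_iff)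
    show "AE V in ?G. emeasure (mvn S) {X. \<forall>i. X $ i / sqrt V \<le> 0 $ i}
        = emeasure (mvn S) {u. \<forall>i. u $ i \<le> 0}"
      using AE_gamma_distr_pos by (rule eventually_mono) (simp only: orthant)
  qed
  also have "\<dots> = emeasure (mvn S) {u. \<forall>i. u $ i \<le> 0}"
    by (simp add: G.emeasure_space_1)
  finally show ?thesis
    by (simp add: mvt_cdf_def measure_def)
qed

lemma mvt_cdf_block_diag_vstack_0:
  fixes A :: "real^'m^'m" and B :: "real^'d^'d" and z :: "real^'d"
  assumes A: "pos_def_mat A" and B: "pos_def_mat B"
  shows "mvt_cdf (vstack 0 z) (block_diag A B) nu = measure (mvn A) {u. \<forall>i. u $ i \<le> 0} * mvt_cdf z B nu"
proof -
  let ?G = "gamma_distr (nu/2) (nu/2)"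
  define P where "P = {u :: real^'m. \<forall>i. u $ i \<le> 0}"
  define Q where "Q V = {w :: real^'d. \<forall>i. w $ i / sqrt V \<le> z $ i}" for V
  have "emeasure (mvn (block_diag A B) \<Otimes>\<^sub>M ?G) {(X, V). \<forall>i. X $ i / sqrt V \<le> vstack 0 z $ i}
      = (\<integral>\<^sup>+V. emeasure (mvn (block_diag A B)) {X. \<forall>i. X $ i / sqrt V \<le> vstack 0 z $ i} \<partial>?G)"
    by (rule emeasure_pair_scaled_le) (simp_all add: sigma_finite_mvn sigma_finite_gamma_distr)
  also have "\<dots> = (\<integral>\<^sup>+V. emeasure (mvn A) P * emeasure (mvn B) (Q V) \<partial>?G)"
    unfolding P_def Q_def using A B
    by (intro nn_integral_cong_AE eventually_mono [OF AE_gamma_distr_pos] emeasure_mvn_block_diag_scaled_le)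
  also have "\<dots> = emeasure (mvn A) P * (\<integral>\<^sup>+V. emeasure (mvn B) (Q V) \<partial>?G)"
    unfolding Q_def
    by (rule nn_integral_cmult, rule measurable_emeasure_scaled_le)
      (simp_all add: sigma_finite_mvn sigma_finite_gamma_distr)
  also have "\<dots> = emeasure (mvn A) P * emeasure (mvn B \<Otimes>\<^sub>M ?G) {(X, V). \<forall>i. X $ i / sqrt V \<le> z $ i}"
    unfolding Q_def
    by (subst emeasure_pair_scaled_le) (simp_all add: sigma_finite_mvn sigma_finite_gamma_distr)
  finally show ?thesis
    by (simp add: mvt_cdf_def measure_def enn2real_mult P_def)
qed

theorem lemma2:
  fixes xi y :: "real^'d" and Omega :: "real^'d^'d"
    and Gamma_bar :: "real^'m^'m" and nu :: real
  assumes "nu > 0"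
    and "pos_def_mat Omega"
    and "pos_def_corr_mat Gamma_bar"
  shows "mvt_cdf (vstack 0 y - vstack 0 xi) (block_diag Gamma_bar Omega) nu
           = mvt_cdf (y - xi) Omega nu * mvt_cdf (0 :: real^'m) Gamma_bar nu"
proof -
  have "pos_def_mat Gamma_bar"
    using assms(3) by (simp add: pos_def_corr_mat_def)
  then show ?thesis
    using assms(1,2) by (simp add: vstack_diff mvt_cdf_block_diag_vstack_0 mvt_cdf_0)
qed

end
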